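(* Let $R\subseteq S$, $\sigma$ be as in the context. Let $a_1,\ldots,a_\ell\in S$ be such that $a_i-a_j^\beta\in S^*$ for all $\beta\in S^*$ and all $1\le i<j\le\ell$. For $i=1,\ldots,\ell$, let $\mathbf{u}_i=(u_{i,1},\ldots,u_{i,n_i})\in S^{n_i}$ and $t_i={\rm rk}(\mathbf{u}_i)$, and set $t=t_1+\cdots+t_\ell$. Then there exists a monic skew polynomial $F\in S[x;\sigma]$ with $\deg(F)=t$ and $F_{a_i}(u_{i,j})=0$ for all $1\le j\le n_i$ and $1\le i\le\ell$.
   Context: $R$ is a finite commutative chain ring with maximal ideal $\mathfrak{m}$, $q=|R/\mathfrak{m}|$; $S=R[x]/(h)$ with $h$ monic of degree $m$ irreducible modulo $\mathfrak{m}$, local with maximal ideal $\mathfrak{M}=\mathfrak{m}S$ and unit group $S^*=S\setminus\mathfrak{M}$. $\sigma$ is a ring automorphism of $S$ generating the Galois group of $R\subseteq S$, with fixed ring $R$, reducing modulo $\mathfrak{M}$ to $y\mapsto y^q$. $S[x;\sigma]$ is the skew polynomial ring with $xa=\sigma(a)x$. For $a,\beta\in S$: $N_i(a)=\sigma^{i-1}(a)\cdots\sigma(a)a$, $\mathcal{D}_a^i(\beta)=\sigma^i(\beta)N_i(a)$, and for $F=\sum_iF_ix^i$, $F_a(\beta)=\sum_iF_i\mathcal{D}_a^i(\beta)$. For $\beta\in S^*$, $a^\beta=\sigma(\beta)a\beta^{-1}$. Rank: for $\mathbf{u}\in S^s$, fix an $R$-basis $\alpha_1,\ldots,\alpha_m$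 of $S$ and write $\mathbf{u}=\sum_{i=1}^m\alpha_i(c_{i,1},\ldots,c_{i,s})$ with $c_{i,j}\in R$; ${\rm rk}(\mathbf{u})$ is the number of nonzero diagonal entries in the Smith normal form of the matrix $(c_{i,j})\in R^{m\times s}$ (independent of the basis). *)

theory Defs
  imports "HOL-Computational_Algebra.Polynomial"
begin

section \<open>Subrings, ideals, chain rings (inside an ambient commutative ring S = type 'a)\<close>

definition subring :: "'a::comm_ring_1 set \<Rightarrow> bool" where
  "subring R \<longleftrightarrow> 0 \<in> R \<and> 1 \<in> R \<and>
     (\<forall>x\<in>R. \<forall>y\<in>R. x + y \<in> R \<and> x - y \<in> R \<and> x * y \<in> R)"

definition ideal_of :: "'a::comm_ring_1 set \<Rightarrow> 'a set \<Rightarrow> bool" where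
  "ideal_of R I \<longleftrightarrow> I \<subseteq> R \<and> 0 \<in> I \<and> (\<forall>x\<in>I. \<forall>y\<in>I. x + y \<in> I)
     \<and> (\<forall>r\<in>R. \<forall>x\<in>I. r * x \<in> I)"

definition chain_ring :: "'a::comm_ring_1 set \<Rightarrow> bool" where
  "chain_ring R \<longleftrightarrow> subring R \<and>
     (\<forall>I J. ideal_of R I \<and> ideal_of R J \<longrightarrow> I \<subseteq> J \<or> J \<subseteq> I)"

definition max_ideal :: "'a::comm_ring_1 set \<Rightarrow> 'a set" where
  "max_ideal R = {r \<in> R. \<not> (\<exists>s\<in>R. r * s = 1)}"

definition residue_card :: "'a::comm_ring_1 set \<Rightarrow> nat" where
  "residue_card R = card R div card (max_ideal R)"

definition ext_ideal :: "'a::comm_ring_1 set \<Rightarrow> 'a set" where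
  "ext_ideal R = {y. \<exists>(k::nat) (c::nat \<Rightarrow> 'a) (s::nat \<Rightarrow> 'a).
      (\<forall>i<k. c i \<in> max_ideal R) \<and> y = (\<Sum>i<k. c i * s i)}"

definition irred_mod_max :: "'a::comm_ring_1 set \<Rightarrow> 'a poly \<Rightarrow> bool" where
  "irred_mod_max R h \<longleftrightarrow> degree h \<ge> 1 \<and>
     \<not> (\<exists>f g. (\<forall>i. coeff f i \<in> R) \<and> (\<forall>i. coeff g i \<in> R) \<and>
            degree f < degree h \<and> degree g < degree h \<and>
            (\<forall>i. coeff (h - f * g) i \<in> max_ideal R))"

definition ring_aut :: "('a::comm_ring_1 \<Rightarrow> 'a) \<Rightarrow> bool" where
  "ring_aut \<sigma> \<longleftrightarrow> bij \<sigma> \<and> (\<forall>x y. \<sigma> (x + y) = \<sigma> x + \<sigma> y \<and> \<sigma> (x * y) = \<sigma> x * \<sigma> y)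
     \<and> \<sigma> 1 = 1"

definition R_basis :: "'a::comm_ring_1 set \<Rightarrow> nat \<Rightarrow> (nat \<Rightarrow> 'a) \<Rightarrow> bool" where
  "R_basis R m \<alpha> \<longleftrightarrow> (\<forall>y. \<exists>!c. (\<forall>i<m. c i \<in> R) \<and> (\<forall>i\<ge>m. c i = 0) \<and>
                          y = (\<Sum>i<m. c i * \<alpha> i))"

text \<open>Skew polynomials in S[x;\<sigma>] are represented by their coefficient sequences
  (a value of type 'a poly; only coefficients, degree and leading coefficient are used).\<close>

definition normf :: "('a::comm_ring_1 \<Rightarrow> 'a) \<Rightarrow> nat \<Rightarrow> 'a \<Rightarrow> 'a" where
  "normf \<sigma> i a = (\<Prod>k<i. (\<sigma> ^^ k) a)"

definition Dop :: "('a::comm_ring_1 \<Rightarrow> 'a) \<Rightarrow> 'a \<Rightarrow> nat \<Rightarrow> 'a \<Rightarrow> 'a" where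
  "Dop \<sigma> a i \<beta> = (\<sigma> ^^ i) \<beta> * normf \<sigma> i a"

definition skew_eval :: "('a::comm_ring_1 \<Rightarrow> 'a) \<Rightarrow> 'a poly \<Rightarrow> 'a \<Rightarrow> 'a \<Rightarrow> 'a" where
  "skew_eval \<sigma> F a \<beta> = (\<Sum>i\<le>degree F. coeff F i * Dop \<sigma> a i \<beta>)"

definition mat_mult :: "(nat \<Rightarrow> nat \<Rightarrow> 'a::comm_ring_1) \<Rightarrow> nat \<Rightarrow> (nat \<Rightarrow> nat \<Rightarrow> 'a) \<Rightarrow> nat \<Rightarrow> nat \<Rightarrow> 'a" where
  "mat_mult A k B = (\<lambda>i j. \<Sum>l<k. A i l * B l j)"

definition invertible_over :: "'a::comm_ring_1 set \<Rightarrow> nat \<Rightarrow> (nat \<Rightarrow> nat \<Rightarrow> 'a) \<Rightarrow> bool" where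
  "invertible_over R n P \<longleftrightarrow> (\<forall>i<n. \<forall>j<n. P i j \<in> R) \<and>
     (\<exists>P'. (\<forall>i<n. \<forall>j<n. P' i j \<in> R) \<and>
        (\<forall>i<n. \<forall>j<n. mat_mult P n P' i j = (if i = j then 1 else 0) \<and>
                     mat_mult P' n P i j = (if i = j then 1 else 0)))"

definition smith_form_of :: "'a::comm_ring_1 set \<Rightarrow> nat \<Rightarrow> nat \<Rightarrow> (nat \<Rightarrow> nat \<Rightarrow> 'a) \<Rightarrow> (nat \<Rightarrow> nat \<Rightarrow> 'a) \<Rightarrow> bool" where
  "smith_form_of R m s C D \<longleftrightarrow>
     (\<exists>P Q. invertible_over R m P \<and> invertible_over R s Q \<and>
        (\<forall>i<m. \<forall>j<s. D i j = mat_mult (mat_mult P m C) s Q i j)) \<and>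
     (\<forall>i<m. \<forall>j<s. i \<noteq> j \<longrightarrow> D i j = 0) \<and>
     (\<forall>k. Suc k < min m s \<longrightarrow> (\<exists>r\<in>R. D (Suc k) (Suc k) = r * D k k))"

definition rk :: "'a::comm_ring_1 set \<Rightarrow> nat \<Rightarrow> nat \<Rightarrow> (nat \<Rightarrow> 'a) \<Rightarrow> nat" where
  "rk R m s u = (LEAST r. \<exists>\<alpha> C D. R_basis R m \<alpha> \<and>
       (\<forall>i<m. \<forall>j<s. C i j \<in> R) \<and> (\<forall>j<s. u j = (\<Sum>i<m. C i j * \<alpha> i)) \<and>
       smith_form_of R m s C D \<and> r = card {k. k < min m s \<and> D k k \<noteq> 0})"

end

theory Submission
  imports Defs "HOL-Combinatorics.Transposition"
begin

text \<open>Every \<open>y \<in> S\<close> divides \<open>\<sigma>(y)\<close>: a uniformizer \<open>\<pi>\<close> of \<open>R\<close> generates the maximal ideal of \<open>S\<close>,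
  so every \<open>y \<noteq> 0\<close> is \<open>\<pi>\<^sup>k\<close> times a unit, and \<open>\<sigma>\<close> fixes \<open>\<pi>\<close>. Since
  \<open>((x - c) F)\<^sub>a(\<beta>) = \<sigma>(F\<^sub>a(\<beta>)) a - c F\<^sub>a(\<beta>)\<close>, writing \<open>\<sigma>(F\<^sub>a(\<beta>)) = F\<^sub>a(\<beta>) t\<close> the product
  \<open>(x - t a) F\<close> gains the root \<open>\<beta>\<close> at \<open>a\<close> and keeps all roots of \<open>F\<close>. The roots of \<open>F\<close> at \<open>a\<close>
  form an \<open>R\<close>-module, and a Smith normal form of the coordinate matrix of \<open>u\<^sub>i\<close> exhibits
  \<open>rk(u\<^sub>i)\<close> elements whose \<open>R\<close>-span contains \<open>u\<^sub>i\<close>. So \<open>t\<close> linear factors suffice.\<close>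

lemma ring_aut_add: "ring_aut \<sigma> \<Longrightarrow> \<sigma> (x + y) = \<sigma> x + \<sigma> y"
  by (simp add: ring_aut_def)

lemma ring_aut_mult: "ring_aut \<sigma> \<Longrightarrow> \<sigma> (x * y) = \<sigma> x * \<sigma> y"
  by (simp add: ring_aut_def)

lemma ring_aut_one: "ring_aut \<sigma> \<Longrightarrow> \<sigma> 1 = 1"
  by (simp add: ring_aut_def)

lemma ring_aut_zero: "ring_aut \<sigma> \<Longrightarrow> \<sigma> 0 = 0"
  using ring_aut_add[of \<sigma> 0 0] by simp

lemma ring_aut_sum: "ring_aut \<sigma> \<Longrightarrow> \<sigma> (sum f I) = (\<Sum>i\<in>I. \<sigma> (f i))"
  by (induction I rule: infinite_finite_induct) (auto simp: ring_aut_zero ring_aut_add)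

lemma ring_aut_prod: "ring_aut \<sigma> \<Longrightarrow> \<sigma> (prod f I) = (\<Prod>i\<in>I. \<sigma> (f i))"
  by (induction I rule: infinite_finite_induct) (auto simp: ring_aut_one ring_aut_mult)

lemma ring_aut_power: "ring_aut \<sigma> \<Longrightarrow> \<sigma> (x ^ k) = \<sigma> x ^ k"
  by (induction k) (auto simp: ring_aut_one ring_aut_mult)

lemma ring_aut_funpow: "ring_aut \<sigma> \<Longrightarrow> ring_aut (\<sigma> ^^ k)"
  by (induction k) (auto simp: ring_aut_def bij_comp)

lemma finite_range_repeats:
  fixes g :: "nat \<Rightarrow> 'b"
  assumes "finite (range g)"
  shows "\<exists>i j. i < j \<and> g i = g j"
proof -
  have "\<not> inj g" using assms finite_imageD infinite_UNIV_nat by blast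
  then show ?thesis unfolding inj_def by (metis linorder_neqE_nat)
qed

lemma finite_inj_funpow_eq_id:
  fixes f :: "'a \<Rightarrow> 'a"
  assumes "finite (UNIV :: 'a set)" and "inj f"
  shows "\<exists>n>0. f ^^ n = id"
proof -
  have "finite (range (\<lambda>k. f ^^ k))"
    using finite_set_of_finite_funs[OF assms(1) assms(1)] by (auto intro: finite_subset)
  then obtain i j where "i < j" "f ^^ i = f ^^ j" by (blast dest: finite_range_repeats)
  then have "(f ^^ i) ((f ^^ (j - i)) x) = (f ^^ i) x" for x
    by (metis add_diff_inverse_nat funpow_add not_less_iff_gr_or_eq o_apply)
  with inj_fn[OF assms(2)] have "f ^^ (j - i) = id" by (auto simp: inj_eq)
  then show ?thesis using \<open>i < j\<close> by (intro exI[of _ "j - i"]) auto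
qed

section \<open>Evaluation of skew polynomials\<close>

lemma normf_Suc: "ring_aut \<sigma> \<Longrightarrow> normf \<sigma> (Suc i) a = \<sigma> (normf \<sigma> i a) * a"
  unfolding normf_def by (subst prod.lessThan_Suc_shift) (simp add: ring_aut_prod mult.commute)

lemma Dop_Suc: "ring_aut \<sigma> \<Longrightarrow> Dop \<sigma> a (Suc i) \<beta> = \<sigma> (Dop \<sigma> a i \<beta>) * a"
  unfolding Dop_def by (simp add: normf_Suc ring_aut_mult funpow_swap1 mult_ac)

lemma skew_eval_conv_sum_lessThan:
  "degree F < N \<Longrightarrow> skew_eval \<sigma> F a \<beta> = (\<Sum>i<N. coeff F i * Dop \<sigma> a i \<beta>)"
  unfolding skew_eval_def
  by (rule sum.mono_neutral_left) (auto simp: coeff_eq_0)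

text \<open>Left multiplication by \<open>x - c\<close> in \<open>S[x;\<sigma>]\<close>, using \<open>x F\<^sub>i x\<^sup>i = \<sigma>(F\<^sub>i) x\<^sup>i\<^sup>+\<^sup>1\<close>.\<close>

definition skew_x_minus :: "('a::comm_ring_1 \<Rightarrow> 'a) \<Rightarrow> 'a \<Rightarrow> 'a poly \<Rightarrow> 'a poly" where
  "skew_x_minus \<sigma> c F = pCons 0 (map_poly \<sigma> F) - smult c F"

lemma coeff_skew_x_minus:
  "ring_aut \<sigma> \<Longrightarrow>
   coeff (skew_x_minus \<sigma> c F) i = (case i of 0 \<Rightarrow> 0 | Suc j \<Rightarrow> \<sigma> (coeff F j)) - c * coeff F i"
  unfolding skew_x_minus_def by (cases i) (auto simp: coeff_map_poly ring_aut_zero)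

lemma skew_eval_skew_x_minus:
  assumes \<sigma>: "ring_aut \<sigma>"
  shows "skew_eval \<sigma> (skew_x_minus \<sigma> c F) a \<beta> =
    \<sigma> (skew_eval \<sigma> F a \<beta>) * a - c * skew_eval \<sigma> F a \<beta>"
proof -
  define N where "N = Suc (degree F)"
  have coeff_0: "coeff (skew_x_minus \<sigma> c F) i = 0" if "i > N" for i
    using that by (cases i) (auto simp: coeff_skew_x_minus[OF \<sigma>] coeff_eq_0 ring_aut_zero[OF \<sigma>] N_def)
  have deg: "degree (skew_x_minus \<sigma> c F) < Suc N"
    using coeff_0 by (meson degree_le le_imp_less_Suc not_le)
  have "skew_eval \<sigma> (skew_x_minus \<sigma> c F) a \<beta> =
      (\<Sum>i<Suc N. (case i of 0 \<Rightarrow> 0 | Suc j \<Rightarrow> \<sigma> (coeff F j)) * Dop \<sigma> a i \<beta>)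
      - c * (\<Sum>i<Suc N. coeff F i * Dop \<sigma> a i \<beta>)"
    unfolding skew_eval_conv_sum_lessThan[OF deg] coeff_skew_x_minus[OF \<sigma>] left_diff_distrib
      sum_subtractf sum_distrib_left
    by (simp add: mult_ac del: sum.lessThan_Suc)
  also have "(\<Sum>i<Suc N. (case i of 0 \<Rightarrow> 0 | Suc j \<Rightarrow> \<sigma> (coeff F j)) * Dop \<sigma> a i \<beta>)
      = \<sigma> (\<Sum>i<N. coeff F i * Dop \<sigma> a i \<beta>) * a"
    by (simp add: sum.lessThan_Suc_shift Dop_Suc[OF \<sigma>] ring_aut_sum[OF \<sigma>] ring_aut_mult[OF \<sigma>]
        sum_distrib_left sum_distrib_right mult_ac del: sum.lessThan_Suc)
  finally show ?thesis
    using skew_eval_conv_sum_lessThan[of F N] skew_eval_conv_sum_lessThan[of F "Suc N"]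
    by (simp add: N_def del: sum.lessThan_Suc)
qed

lemma skew_x_minus_monic:
  assumes \<sigma>: "ring_aut \<sigma>" and nontriv: "(0::'a::comm_ring_1) \<noteq> 1" and F: "lead_coeff F = (1::'a)"
  shows "degree (skew_x_minus \<sigma> c F) = Suc (degree F)" "lead_coeff (skew_x_minus \<sigma> c F) = 1"
proof -
  have top: "coeff (skew_x_minus \<sigma> c F) (Suc (degree F)) = 1"
    using F by (simp add: coeff_skew_x_minus[OF \<sigma>] coeff_eq_0 ring_aut_one[OF \<sigma>])
  have "coeff (skew_x_minus \<sigma> c F) i = 0" if "i > Suc (degree F)" for i
    using that by (cases i) (auto simp: coeff_skew_x_minus[OF \<sigma>] coeff_eq_0 ring_aut_zero[OF \<sigma>])
  then have "degree (skew_x_minus \<sigma> c F) \<le> Suc (degree F)" by (meson degree_le not_le)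
  moreover have "degree (skew_x_minus \<sigma> c F) \<ge> Suc (degree F)"
    using top nontriv by (metis le_degree)
  ultimately show "degree (skew_x_minus \<sigma> c F) = Suc (degree F)" by simp
  then show "lead_coeff (skew_x_minus \<sigma> c F) = 1" using top by simp
qed

definition R_submodule :: "'a::comm_ring_1 set \<Rightarrow> 'a set \<Rightarrow> bool" where
  "R_submodule R M \<longleftrightarrow> 0 \<in> M \<and> (\<forall>x\<in>M. \<forall>y\<in>M. x + y \<in> M) \<and> (\<forall>x\<in>M. \<forall>r\<in>R. x * r \<in> M)"

lemma R_submodule_sum:
  assumes "R_submodule R M" and "\<And>j. j \<in> J \<Longrightarrow> v j \<in> M" and "\<And>j. j \<in> J \<Longrightarrow> r j \<in> R"
  shows "(\<Sum>j\<in>J. v j * r j) \<in> M"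
  using assms(2,3) by (induction J rule: infinite_finite_induct)
    (use assms(1) in \<open>auto simp: R_submodule_def\<close>)

lemma R_submodule_skew_roots:
  assumes \<sigma>: "ring_aut \<sigma>" and fixes_R: "\<And>r. r \<in> R \<Longrightarrow> \<sigma> r = r"
  shows "R_submodule R {\<beta>. skew_eval \<sigma> F a \<beta> = 0}"
proof -
  have "(\<sigma> ^^ i) r = r" if "r \<in> R" for i r
    using that fixes_R by (induction i) auto
  then have "skew_eval \<sigma> F a (\<beta> * r) = skew_eval \<sigma> F a \<beta> * r" if "r \<in> R" for \<beta> r
    using that unfolding skew_eval_def Dop_def sum_distrib_right
    by (intro sum.cong) (simp_all add: ring_aut_mult[OF ring_aut_funpow[OF \<sigma>]] mult_ac)
  moreover have "skew_eval \<sigma> F a (\<beta> + \<gamma>) = skew_eval \<sigma> F a \<beta> + skew_eval \<sigma> F a \<gamma>" for \<beta> \<gamma>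
    unfolding skew_eval_def Dop_def
    by (simp add: ring_aut_add[OF ring_aut_funpow[OF \<sigma>]] distrib_left distrib_right sum.distrib)
  moreover have "skew_eval \<sigma> F a 0 = 0"
    unfolding skew_eval_def Dop_def by (simp add: ring_aut_zero[OF ring_aut_funpow[OF \<sigma>]])
  ultimately show ?thesis unfolding R_submodule_def by auto
qed

lemma monic_skew_poly_vanishing_on_list:
  assumes \<sigma>: "ring_aut \<sigma>" and nontriv: "(0::'a::comm_ring_1) \<noteq> 1"
    and dvd_image: "\<And>y. y dvd \<sigma> y"
  shows "\<exists>F. lead_coeff F = (1::'a) \<and> degree F = length ps \<and>
     (\<forall>(a, \<beta>)\<in>set ps. skew_eval \<sigma> F a \<beta> = 0)"
proof (induction ps)
  case Nil
  show ?case by (intro exI[of _ 1]) simp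
next
  case (Cons p ps)
  obtain a \<beta> where p: "p = (a, \<beta>)" by force
  from Cons obtain F where F: "lead_coeff F = 1" "degree F = length ps"
    "\<forall>(a, \<beta>)\<in>set ps. skew_eval \<sigma> F a \<beta> = 0" by blast
  obtain t where t: "\<sigma> (skew_eval \<sigma> F a \<beta>) = skew_eval \<sigma> F a \<beta> * t" using dvd_image by blast
  define G where "G = skew_x_minus \<sigma> (t * a) F"
  have "skew_eval \<sigma> G a \<beta> = 0"
    unfolding G_def skew_eval_skew_x_minus[OF \<sigma>] t by (simp add: mult_ac)
  moreover have "skew_eval \<sigma> G a' \<beta>' = 0" if "(a', \<beta>') \<in> set ps" for a' \<beta>'
    using F(3) that unfolding G_def skew_eval_skew_x_minus[OF \<sigma>] by (auto simp: ring_aut_zero[OF \<sigma>])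
  ultimately show ?case
    using skew_x_minus_monic[OF \<sigma> nontriv F(1), of "t * a"] F(2) p by (intro exI[of _ G]) (auto simp: G_def)
qed

section \<open>Chain rings\<close>

definition divides_in :: "'a::comm_ring_1 set \<Rightarrow> 'a \<Rightarrow> 'a \<Rightarrow> bool" where
  "divides_in R p x \<longleftrightarrow> (\<exists>r\<in>R. x = r * p)"

definition uniformizer :: "'a::comm_ring_1 set \<Rightarrow> 'a" where
  "uniformizer R = (SOME p. p \<in> max_ideal R \<and> (\<forall>x\<in>max_ideal R. divides_in R p x))"

locale chain_subring =
  fixes R :: "'a::comm_ring_1 set"
  assumes chain_ring: "chain_ring R"
begin

lemma subring: "subring R"
  using chain_ring by (simp add: chain_ring_def)

lemma zero_mem: "0 \<in> R" and one_mem: "1 \<in> R"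
  using subring by (simp_all add: subring_def)

lemma add_mem: "x \<in> R \<Longrightarrow> y \<in> R \<Longrightarrow> x + y \<in> R"
  and diff_mem: "x \<in> R \<Longrightarrow> y \<in> R \<Longrightarrow> x - y \<in> R"
  and mult_mem: "x \<in> R \<Longrightarrow> y \<in> R \<Longrightarrow> x * y \<in> R"
  using subring by (simp_all add: subring_def)

lemma uminus_mem: "x \<in> R \<Longrightarrow> - x \<in> R"
  using diff_mem[OF zero_mem] by force

lemma power_mem: "x \<in> R \<Longrightarrow> x ^ k \<in> R"
  by (induction k) (auto simp: one_mem mult_mem)

lemma divides_in_one_iff: "divides_in R 1 x \<longleftrightarrow> x \<in> R"
  by (simp add: divides_in_def)

lemma divides_in_refl: "divides_in R p p"
  unfolding divides_in_def using one_mem by force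

lemma divides_in_trans:
  assumes "divides_in R p x" and "divides_in R x y"
  shows "divides_in R p y"
proof -
  obtain r r' where "r \<in> R" "x = r * p" "r' \<in> R" "y = r' * x"
    using assms unfolding divides_in_def by blast
  then have "r' * r \<in> R" "y = (r' * r) * p" by (simp_all add: mult_mem mult.assoc)
  then show ?thesis unfolding divides_in_def by blast
qed

lemma divides_in_mult_left: "c \<in> R \<Longrightarrow> divides_in R p x \<Longrightarrow> divides_in R p (c * x)"
  unfolding divides_in_def by (auto simp: mult.assoc[symmetric] intro: mult_mem)

lemma divides_in_add: "divides_in R p x \<Longrightarrow> divides_in R p y \<Longrightarrow> divides_in R p (x + y)"
  unfolding divides_in_def by (auto simp: distrib_right[symmetric] intro: add_mem)

lemma divides_in_zero: "divides_in R p 0"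
  unfolding divides_in_def using zero_mem by force

lemma divides_in_mult_right: "c \<in> R \<Longrightarrow> divides_in R p x \<Longrightarrow> divides_in R p (x * c)"
  using divides_in_mult_left by (simp add: mult.commute)

lemma divides_in_sum:
  "(\<And>i. i \<in> I \<Longrightarrow> divides_in R p (f i)) \<Longrightarrow> divides_in R p (sum f I)"
  by (induction I rule: infinite_finite_induct) (auto simp: divides_in_zero divides_in_add)

lemma ideal_of_principal: "z \<in> R \<Longrightarrow> ideal_of R {x. divides_in R z x}"
proof -
  assume z: "z \<in> R"
  have "{x. divides_in R z x} \<subseteq> R"
    unfolding divides_in_def using z mult_mem by auto
  then show ?thesis
    unfolding ideal_of_def by (auto intro: divides_in_zero divides_in_add divides_in_mult_left)
qed

lemma divides_in_total:
  assumes "x \<in> R" and "y \<in> R"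
  shows "divides_in R x y \<or> divides_in R y x"
proof -
  have "x \<in> {z. divides_in R x z}" "y \<in> {z. divides_in R y z}"
    by (simp_all add: divides_in_refl)
  moreover have "\<forall>I J. ideal_of R I \<and> ideal_of R J \<longrightarrow> I \<subseteq> J \<or> J \<subseteq> I"
    using chain_ring unfolding chain_ring_def by blast
  then have "{z. divides_in R x z} \<subseteq> {z. divides_in R y z} \<or> {z. divides_in R y z} \<subseteq> {z. divides_in R x z}"
    using ideal_of_principal assms by simp
  ultimately show ?thesis by blast
qed

lemma finite_common_divisor_in:
  assumes "finite X" "X \<noteq> {}" "X \<subseteq> R"
  shows "\<exists>p\<in>X. \<forall>x\<in>X. divides_in R p x"
  using assms
proof (induction X rule: finite_ne_induct)
  case (singleton x)
  then show ?case by (simp add: divides_in_refl)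
next
  case (insert y X)
  then obtain p where p: "p \<in> X" "\<forall>x\<in>X. divides_in R p x" by auto
  consider "divides_in R p y" | "divides_in R y p"
    using divides_in_total[of p y] p(1) insert.prems by blast
  then show ?case
  proof cases
    case 1
    then show ?thesis using p by auto
  next
    case 2
    then show ?thesis using p by (auto intro: divides_in_trans divides_in_refl)
  qed
qed

lemma max_ideal_subset: "max_ideal R \<subseteq> R"
  unfolding max_ideal_def by auto

lemma zero_mem_max_ideal: "(0::'a) \<noteq> 1 \<Longrightarrow> 0 \<in> max_ideal R"
  unfolding max_ideal_def using zero_mem by auto

lemma one_not_mem_max_ideal: "1 \<notin> max_ideal R"
  unfolding max_ideal_def using one_mem by auto

lemma mult_mem_max_ideal:
  assumes r: "r \<in> R" and x: "x \<in> max_ideal R"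
  shows "r * x \<in> max_ideal R"
proof -
  have "x \<in> R" and x_nonunit: "\<not> (\<exists>s\<in>R. x * s = 1)"
    using x unfolding max_ideal_def by auto
  have "\<not> (\<exists>s\<in>R. r * x * s = 1)"
  proof
    assume "\<exists>s\<in>R. r * x * s = 1"
    then obtain s where "s \<in> R" "x * (r * s) = 1" by (auto simp: mult_ac)
    then show False using x_nonunit r mult_mem by blast
  qed
  then show ?thesis using \<open>x \<in> R\<close> r mult_mem unfolding max_ideal_def by blast
qed

lemma add_mem_max_ideal:
  assumes x: "x \<in> max_ideal R" and y: "y \<in> max_ideal R"
  shows "x + y \<in> max_ideal R"
proof -
  have "x \<in> R" "y \<in> R" using x y max_ideal_subset by auto
  then consider r where "r \<in> R" "y = r * x" | r where "r \<in> R" "x = r * y"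
    using divides_in_total unfolding divides_in_def by blast
  then show ?thesis
  proof cases
    case 1
    then have "x + y = (1 + r) * x" by (simp add: algebra_simps)
    then show ?thesis using mult_mem_max_ideal[OF add_mem[OF one_mem 1(1)] x] by simp
  next
    case 2
    then have "x + y = (1 + r) * y" by (simp add: algebra_simps)
    then show ?thesis using mult_mem_max_ideal[OF add_mem[OF one_mem 2(1)] y] by simp
  qed
qed

lemma one_plus_not_mem_max_ideal:
  assumes x: "x \<in> max_ideal R"
  shows "1 + x \<notin> max_ideal R"
proof
  assume "1 + x \<in> max_ideal R"
  moreover have "- 1 * x \<in> max_ideal R" by (rule mult_mem_max_ideal[OF uminus_mem[OF one_mem] x])
  ultimately have "(1 + x) + - 1 * x \<in> max_ideal R" by (rule add_mem_max_ideal)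
  then show False using one_not_mem_max_ideal by simp
qed

lemma residue_card_ge_two:
  assumes "finite R" and "(0::'a) \<noteq> 1"
  shows "residue_card R \<ge> 2"
proof -
  let ?M = "max_ideal R"
  have fin: "finite ?M" using assms(1) max_ideal_subset by (rule finite_subset[rotated])
  have "?M \<union> (\<lambda>x. 1 + x) ` ?M \<subseteq> R"
    using max_ideal_subset one_mem add_mem by blast
  then have "card (?M \<union> (\<lambda>x. 1 + x) ` ?M) \<le> card R" using assms(1) by (rule card_mono[rotated])
  moreover have "card (?M \<union> (\<lambda>x. 1 + x) ` ?M) = 2 * card ?M"
  proof -
    have "?M \<inter> (\<lambda>x. 1 + x) ` ?M = {}" using one_plus_not_mem_max_ideal by blast
    then show ?thesis using fin by (simp add: card_Un_disjoint card_image)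
  qed
  moreover have "card ?M > 0" using zero_mem_max_ideal[OF assms(2)] fin by (auto simp: card_gt_0_iff)
  ultimately have "2 * card ?M div card ?M \<le> card R div card ?M" by (intro div_le_mono) simp
  then show ?thesis unfolding residue_card_def using \<open>card ?M > 0\<close> by simp
qed

lemma uniformizer_generates_max_ideal:
  assumes "finite R" and "(0::'a) \<noteq> 1"
  shows "uniformizer R \<in> max_ideal R" "\<And>x. x \<in> max_ideal R \<Longrightarrow> divides_in R (uniformizer R) x"
proof -
  have "finite (max_ideal R)" using assms(1) max_ideal_subset by (rule finite_subset[rotated])
  moreover have "max_ideal R \<noteq> {}" using zero_mem_max_ideal[OF assms(2)] by blast
  ultimately have "\<exists>p. p \<in> max_ideal R \<and> (\<forall>x\<in>max_ideal R. divides_in R p x)"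
    using finite_common_divisor_in[OF _ _ max_ideal_subset] by blast
  then have "uniformizer R \<in> max_ideal R \<and> (\<forall>x\<in>max_ideal R. divides_in R (uniformizer R) x)"
    unfolding uniformizer_def by (rule someI_ex)
  then show "uniformizer R \<in> max_ideal R" "\<And>x. x \<in> max_ideal R \<Longrightarrow> divides_in R (uniformizer R) x"
    by auto
qed

end

section \<open>The uniformizer and the automorphism \<open>\<sigma>\<close>\<close>

lemma dvd_diff_mult: "p dvd x - y \<Longrightarrow> p dvd x' - y' \<Longrightarrow> p dvd x * x' - y * y'"
  for p :: "'a::comm_ring_1"
proof -
  assume "p dvd x - y" "p dvd x' - y'"
  then have "p dvd x * (x' - y') + (x - y) * y'" by simp
  then show ?thesis by (simp add: algebra_simps)
qed

lemma dvd_diff_power: "p dvd x - y \<Longrightarrow> p dvd x ^ k - y ^ k"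
  for p :: "'a::comm_ring_1"
  by (induction k) (auto intro: dvd_diff_mult)

lemma dvd_diff_prod: "(\<And>i. i \<in> I \<Longrightarrow> p dvd f i - g i) \<Longrightarrow> p dvd prod f I - prod g I"
  for p :: "'a::comm_ring_1"
  by (induction I rule: infinite_finite_induct) (auto intro: dvd_diff_mult)

text \<open>The ring \<open>S\<close> of the paper is the ambient type \<open>'a\<close>.\<close>

locale galois_chain_ext = chain_subring +
  fixes \<sigma> :: "'a::comm_ring_1 \<Rightarrow> 'a"
  assumes finite_UNIV: "finite (UNIV :: 'a set)"
    and nontriv: "(0::'a) \<noteq> 1"
    and ring_aut: "ring_aut \<sigma>"
    and fixed_ring: "{y. \<sigma> y = y} = R"
    and frobenius: "\<And>y. \<sigma> y - y ^ residue_card R \<in> ext_ideal R"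
begin

abbreviation \<pi> :: 'a where "\<pi> \<equiv> uniformizer R"

lemma finite_R: "finite R"
  using finite_UNIV by (rule finite_subset[rotated]) simp

lemma uniformizer_mem: "\<pi> \<in> R"
  using uniformizer_generates_max_ideal(1)[OF finite_R nontriv] max_ideal_subset by blast

lemma uniformizer_dvd_max_ideal:
  assumes "c \<in> max_ideal R"
  shows "\<pi> dvd c"
proof -
  obtain r where "c = r * \<pi>"
    using uniformizer_generates_max_ideal(2)[OF finite_R nontriv assms] unfolding divides_in_def by blast
  then show ?thesis by simp
qed

lemma uniformizer_dvd_ext_ideal:
  assumes "y \<in> ext_ideal R"
  shows "\<pi> dvd y"
proof -
  obtain k :: nat and c s where c: "\<forall>i<k. c i \<in> max_ideal R" and y: "y = (\<Sum>i<k. c i * s i)"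
    using assms unfolding ext_ideal_def by blast
  show ?thesis
    unfolding y by (intro dvd_sum dvd_mult2 uniformizer_dvd_max_ideal) (use c in auto)
qed

lemma uniformizer_dvd_frobenius_funpow: "\<pi> dvd (\<sigma> ^^ k) y - y ^ (residue_card R ^ k)"
proof (induction k)
  case (Suc k)
  let ?q = "residue_card R"
  have "\<pi> dvd (\<sigma> ((\<sigma> ^^ k) y) - ((\<sigma> ^^ k) y) ^ ?q) + (((\<sigma> ^^ k) y) ^ ?q - (y ^ (?q ^ k)) ^ ?q)"
    using uniformizer_dvd_ext_ideal[OF frobenius] dvd_diff_power[OF Suc.IH] by (rule dvd_add)
  then show ?case by (simp add: power_mult[symmetric] mult.commute)
qed simp

lemma finite_order: "\<exists>n>0. \<sigma> ^^ n = id"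
  using finite_inj_funpow_eq_id[OF finite_UNIV] ring_aut by (simp add: ring_aut_def bij_is_inj)

text \<open>The norm \<open>\<Prod>k<n. \<sigma>\<^sup>k(y)\<close> of a nonunit lies in \<open>R\<close> but is no unit there, so \<open>\<pi>\<close> divides it;
  modulo \<open>\<pi>\<close> it is a power of \<open>y\<close>.\<close>

lemma uniformizer_dvd_power_of_nonunit:
  assumes nonunit: "\<not> (\<exists>z. y * z = 1)"
  shows "\<exists>e. \<pi> dvd y ^ e"
proof -
  obtain n where "n > 0" and n: "\<sigma> ^^ n = id" using finite_order by blast
  then obtain n' where n': "n = Suc n'" using gr0_implies_Suc by blast
  define norm where "norm = (\<Prod>k<n. (\<sigma> ^^ k) y)"
  have norm_eq: "norm = y * (\<Prod>k<n'. (\<sigma> ^^ Suc k) y)"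
    unfolding norm_def n' by (subst prod.lessThan_Suc_shift) simp
  have "\<sigma> norm = (\<Prod>k<n. (\<sigma> ^^ Suc k) y)"
    unfolding norm_def by (simp add: ring_aut_prod[OF ring_aut])
  also have "\<dots> = norm"
  proof -
    have "(\<sigma> ^^ Suc n') y = y" using n n' by simp
    then show ?thesis unfolding norm_eq n' by (simp only: prod.lessThan_Suc mult.commute)
  qed
  finally have "norm \<in> R" using fixed_ring by auto
  moreover have "\<not> (\<exists>s\<in>R. norm * s = 1)"
    using nonunit unfolding norm_eq by (metis mult.assoc)
  ultimately have "norm \<in> max_ideal R" unfolding max_ideal_def by blast
  then have "\<pi> dvd norm" by (rule uniformizer_dvd_max_ideal)
  moreover have "\<pi> dvd norm - (\<Prod>k<n. y ^ (residue_card R ^ k))"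
    unfolding norm_def by (rule dvd_diff_prod) (rule uniformizer_dvd_frobenius_funpow)
  ultimately have "\<pi> dvd norm - (norm - (\<Prod>k<n. y ^ (residue_card R ^ k)))"
    by (rule dvd_diff)
  then have "\<pi> dvd y ^ (\<Sum>k<n. residue_card R ^ k)" by (simp add: power_sum)
  then show ?thesis by blast
qed

text \<open>If \<open>\<sigma>\<^sup>n = id\<close>, then \<open>y = \<sigma>\<^sup>n\<^sup>e(y)\<close> is congruent to \<open>y ^ q ^ (n e)\<close> modulo \<open>\<pi>\<close>, a multiple
  of \<open>y\<^sup>e\<close>.\<close>

lemma uniformizer_dvd_of_dvd_power:
  assumes "\<pi> dvd y ^ e"
  shows "\<pi> dvd y"
proof -
  obtain n where "n > 0" and n: "\<sigma> ^^ n = id" using finite_order by blast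
  define Q where "Q = residue_card R ^ (n * e)"
  have "e < 2 ^ e" by (rule less_exp)
  also have "(2::nat) ^ e \<le> residue_card R ^ e"
    using residue_card_ge_two[OF finite_R nontriv] by (rule power_mono) simp
  also have "\<dots> \<le> Q"
    unfolding Q_def using \<open>n > 0\<close> residue_card_ge_two[OF finite_R nontriv] by (intro power_increasing) auto
  finally have "y ^ Q = y ^ e * y ^ (Q - e)" by (simp flip: power_add)
  then have "\<pi> dvd y ^ Q" using assms by simp
  moreover have "\<sigma> ^^ (n * e) = id"
    using n by (induction e) (simp_all add: funpow_add)
  then have "\<pi> dvd y - y ^ Q"
    using uniformizer_dvd_frobenius_funpow[of "n * e" y] unfolding Q_def by simp
  ultimately have "\<pi> dvd (y - y ^ Q) + y ^ Q" by (metis dvd_add)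
  then show ?thesis by simp
qed

lemma uniformizer_dvd_nonunit: "\<not> (\<exists>z. y * z = 1) \<Longrightarrow> \<pi> dvd y"
  using uniformizer_dvd_power_of_nonunit uniformizer_dvd_of_dvd_power by blast

lemma uniformizer_nilpotent: "\<exists>N. \<pi> ^ N = 0"
proof -
  obtain i j where "i < j" and ij: "\<pi> ^ i = \<pi> ^ j"
    using finite_range_repeats[of "\<lambda>k. \<pi> ^ k"] finite_UNIV by (auto intro: finite_subset)
  define d where "d = j - i"
  have "\<pi> ^ (d - 1) * \<pi> \<in> max_ideal R"
    using mult_mem_max_ideal[OF power_mem[OF uniformizer_mem] uniformizer_generates_max_ideal(1)[OF finite_R nontriv]] .
  moreover have "\<pi> ^ (d - 1) * \<pi> = \<pi> ^ d"
    using \<open>i < j\<close> by (simp add: d_def Suc_diff_Suc flip: power_Suc2)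
  ultimately have "- 1 * \<pi> ^ d \<in> max_ideal R"
    using mult_mem_max_ideal[OF uminus_mem[OF one_mem]] by simp
  then have "1 - \<pi> ^ d \<notin> max_ideal R"
    using one_plus_not_mem_max_ideal by fastforce
  moreover have "1 - \<pi> ^ d \<in> R" using diff_mem[OF one_mem power_mem[OF uniformizer_mem]] .
  ultimately obtain s where s: "(1 - \<pi> ^ d) * s = 1" unfolding max_ideal_def by blast
  have "\<pi> ^ i * (1 - \<pi> ^ d) = \<pi> ^ i - \<pi> ^ (i + d)"
    by (simp add: right_diff_distrib power_add)
  also have "\<dots> = 0" using ij \<open>i < j\<close> by (simp add: d_def)
  finally have "\<pi> ^ i * (1 - \<pi> ^ d) = 0" .
  then have "\<pi> ^ i = 0" by (metis s mult.assoc mult_1_right mult_zero_left)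
  then show ?thesis by blast
qed

lemma uniformizer_power_mult_unit_or_dvd:
  "(\<exists>k w z. y = \<pi> ^ k * w \<and> w * z = 1) \<or> \<pi> ^ N dvd y"
proof (induction N)
  case (Suc N)
  show ?case
  proof (cases "\<pi> ^ N dvd y")
    case True
    then obtain w where y: "y = \<pi> ^ N * w" by blast
    show ?thesis
    proof (cases "\<exists>z. w * z = 1")
      case True
      then show ?thesis using y by blast
    next
      case False
      then have "\<pi> ^ Suc N dvd y"
        unfolding y power_Suc2 using uniformizer_dvd_nonunit by (simp add: mult_dvd_mono)
      then show ?thesis by blast
    qed
  next
    case False
    then show ?thesis using Suc.IH by blast
  qed
qed simp

lemma dvd_image: "y dvd \<sigma> y"
proof (cases "y = 0")
  case True
  then show ?thesis using ring_aut_zero[OF ring_aut] by simp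
next
  case False
  obtain N where "\<pi> ^ N = 0" using uniformizer_nilpotent by blast
  then obtain k w z where y: "y = \<pi> ^ k * w" and z: "w * z = 1"
    using uniformizer_power_mult_unit_or_dvd[of y N] False by auto
  have "\<sigma> \<pi> = \<pi>" using uniformizer_mem fixed_ring by auto
  then have "\<sigma> y = \<pi> ^ k * \<sigma> w"
    unfolding y by (simp add: ring_aut_mult[OF ring_aut] ring_aut_power[OF ring_aut])
  also have "\<dots> = y * (\<sigma> w * z)"
  proof -
    have "y * (\<sigma> w * z) = \<pi> ^ k * \<sigma> w * (w * z)" unfolding y by (simp add: mult_ac)
    then show ?thesis using z by simp
  qed
  finally show ?thesis ..
qed

end

section \<open>Matrices over a chain ring and the Smith normal form\<close>

definition mat_id :: "nat \<Rightarrow> nat \<Rightarrow> 'a::comm_ring_1" where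
  "mat_id i j = (if i = j then 1 else 0)"

definition mat_equiv_over ::
  "'a::comm_ring_1 set \<Rightarrow> nat \<Rightarrow> nat \<Rightarrow> (nat \<Rightarrow> nat \<Rightarrow> 'a) \<Rightarrow> (nat \<Rightarrow> nat \<Rightarrow> 'a) \<Rightarrow> bool" where
  "mat_equiv_over R m s A B \<longleftrightarrow> (\<exists>P Q. invertible_over R m P \<and> invertible_over R s Q \<and>
      (\<forall>i<m. \<forall>j<s. B i j = mat_mult (mat_mult P m A) s Q i j))"

definition swap_mat :: "nat \<Rightarrow> nat \<Rightarrow> nat \<Rightarrow> nat \<Rightarrow> 'a::comm_ring_1" where
  "swap_mat a b i j = (if j = Transposition.transpose a b i then 1 else 0)"

definition first_col_mat :: "(nat \<Rightarrow> 'a) \<Rightarrow> nat \<Rightarrow> nat \<Rightarrow> 'a::comm_ring_1" where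
  "first_col_mat r i j = mat_id i j + (if j = 0 \<and> i \<noteq> 0 then r i else 0)"

definition first_row_mat :: "(nat \<Rightarrow> 'a) \<Rightarrow> nat \<Rightarrow> nat \<Rightarrow> 'a::comm_ring_1" where
  "first_row_mat c i j = mat_id i j + (if i = 0 \<and> j \<noteq> 0 then c j else 0)"

definition diag_block :: "'a \<Rightarrow> (nat \<Rightarrow> nat \<Rightarrow> 'a) \<Rightarrow> nat \<Rightarrow> nat \<Rightarrow> 'a::comm_ring_1" where
  "diag_block p X i j =
     (if i = 0 \<and> j = 0 then p else if i = 0 \<or> j = 0 then 0 else X (i - 1) (j - 1))"

lemma invertible_over_iff:
  "invertible_over R n P \<longleftrightarrow> (\<forall>i<n. \<forall>j<n. P i j \<in> R) \<and>
     (\<exists>P'. (\<forall>i<n. \<forall>j<n. P' i j \<in> R) \<and>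
        (\<forall>i<n. \<forall>j<n. mat_mult P n P' i j = mat_id i j \<and> mat_mult P' n P i j = mat_id i j))"
  unfolding invertible_over_def mat_id_def ..

lemma smith_form_of_iff:
  "smith_form_of R m s A D \<longleftrightarrow> mat_equiv_over R m s A D \<and>
     (\<forall>i<m. \<forall>j<s. i \<noteq> j \<longrightarrow> D i j = 0) \<and>
     (\<forall>k. Suc k < min m s \<longrightarrow> (\<exists>r\<in>R. D (Suc k) (Suc k) = r * D k k))"
  unfolding smith_form_of_def mat_equiv_over_def ..

lemma mat_mult_cong:
  "(\<And>l. l < k \<Longrightarrow> A i l = A' i l) \<Longrightarrow> (\<And>l. l < k \<Longrightarrow> B l j = B' l j) \<Longrightarrow>
   mat_mult A k B i j = mat_mult A' k B' i j"
  unfolding mat_mult_def by (rule sum.cong) auto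

lemma mat_mult_assoc: "mat_mult (mat_mult A k B) n C = mat_mult A k (mat_mult B n C)"
  unfolding mat_mult_def
  by (auto simp: sum_distrib_left sum_distrib_right mult.assoc intro!: ext sum.swap)

lemma mat_mult_id_left:
  assumes "i < n"
  shows "mat_mult mat_id n A i j = A i j"
proof -
  have "mat_mult mat_id n A i j = (\<Sum>l<n. if i = l then A l j else 0)"
    unfolding mat_mult_def mat_id_def by (rule sum.cong) auto
  then show ?thesis using assms by simp
qed

lemma mat_mult_id_right:
  assumes "j < n"
  shows "mat_mult A n mat_id i j = A i j"
proof -
  have "mat_mult A n mat_id i j = (\<Sum>l<n. if l = j then A i l else 0)"
    unfolding mat_mult_def mat_id_def by (rule sum.cong) auto
  then show ?thesis using assms by simp
qed

lemma mat_mult_eq_id_left: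
  "(\<And>a b. a < n \<Longrightarrow> b < n \<Longrightarrow> E a b = mat_id a b) \<Longrightarrow> i < n \<Longrightarrow> mat_mult E n A i j = A i j"
  using mat_mult_cong[of n E i mat_id A j A] mat_mult_id_left[of i n A j] by simp

lemma transpose_less: "a < n \<Longrightarrow> b < n \<Longrightarrow> i < n \<Longrightarrow> Transposition.transpose a b i < n"
  by (simp add: Transposition.transpose_def)

lemma mat_mult_swap_mat_left:
  assumes "a < n" "b < n" "i < n"
  shows "mat_mult (swap_mat a b) n A i j = A (Transposition.transpose a b i) j"
proof -
  have "mat_mult (swap_mat a b) n A i j = (\<Sum>l<n. if l = Transposition.transpose a b i then A l j else 0)"
    unfolding mat_mult_def swap_mat_def by (rule sum.cong) auto
  then show ?thesis using transpose_less[OF assms] by simp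
qed

lemma mat_mult_swap_mat_right:
  assumes "a < n" "b < n" "j < n"
  shows "mat_mult A n (swap_mat a b) i j = A i (Transposition.transpose a b j)"
proof -
  have "mat_mult A n (swap_mat a b) i j = (\<Sum>l<n. if l = Transposition.transpose a b j then A i l else 0)"
    unfolding mat_mult_def swap_mat_def by (rule sum.cong) (auto simp: transpose_eq_iff)
  then show ?thesis using transpose_less[OF assms] by simp
qed

lemma mat_mult_first_col_mat_left:
  assumes "0 < n" "i < n"
  shows "mat_mult (first_col_mat r) n A i j = A i j + (if i \<noteq> 0 then r i * A 0 j else 0)"
proof -
  have "mat_mult (first_col_mat r) n A i j =
      mat_mult mat_id n A i j + (\<Sum>l<n. if l = 0 then (if i \<noteq> 0 then r i * A 0 j else 0) else 0)"
    unfolding mat_mult_def first_col_mat_def distrib_right sum.distrib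
    by (intro arg_cong2[where f = "(+)"] sum.cong) auto
  then show ?thesis using assms by (simp add: mat_mult_id_left)
qed

lemma mat_mult_first_row_mat_right:
  assumes "0 < n" "j < n"
  shows "mat_mult A n (first_row_mat c) i j = A i j + (if j \<noteq> 0 then A i 0 * c j else 0)"
proof -
  have "mat_mult A n (first_row_mat c) i j =
      mat_mult A n mat_id i j + (\<Sum>l<n. if l = 0 then (if j \<noteq> 0 then A i 0 * c j else 0) else 0)"
    unfolding mat_mult_def first_row_mat_def distrib_left sum.distrib
    by (intro arg_cong2[where f = "(+)"] sum.cong) auto
  then show ?thesis using assms by (simp add: mat_mult_id_right)
qed

lemma mat_mult_diag_block:
  "mat_mult (diag_block a X) (Suc k) (diag_block b Y) = diag_block (a * b) (mat_mult X k Y)"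
proof (intro ext)
  fix i j
  show "mat_mult (diag_block a X) (Suc k) (diag_block b Y) i j = diag_block (a * b) (mat_mult X k Y) i j"
    unfolding mat_mult_def sum.lessThan_Suc_shift by (cases i; cases j) (simp_all add: diag_block_def)
qed

context chain_subring
begin

lemma divides_in_mat_mult_left:
  "(\<And>l. l < k \<Longrightarrow> A i l \<in> R) \<Longrightarrow> (\<And>l. l < k \<Longrightarrow> divides_in R p (B l j)) \<Longrightarrow>
   divides_in R p (mat_mult A k B i j)"
  unfolding mat_mult_def by (intro divides_in_sum divides_in_mult_left) auto

lemma divides_in_mat_mult_right:
  "(\<And>l. l < k \<Longrightarrow> divides_in R p (A i l)) \<Longrightarrow> (\<And>l. l < k \<Longrightarrow> B l j \<in> R) \<Longrightarrow>
   divides_in R p (mat_mult A k B i j)"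
  unfolding mat_mult_def by (intro divides_in_sum divides_in_mult_right) auto

lemma mat_mult_mem:
  "(\<And>l. l < k \<Longrightarrow> A i l \<in> R) \<Longrightarrow> (\<And>l. l < k \<Longrightarrow> B l j \<in> R) \<Longrightarrow> mat_mult A k B i j \<in> R"
  using divides_in_mat_mult_left[of k A i 1 B j] by (simp add: divides_in_one_iff)

lemma invertible_over_mem: "invertible_over R n P \<Longrightarrow> i < n \<Longrightarrow> j < n \<Longrightarrow> P i j \<in> R"
  unfolding invertible_over_def by blast

lemma invertible_over_mat_id: "invertible_over R n mat_id"
  unfolding invertible_over_iff
  by (intro conjI exI[of _ mat_id]) (auto simp: mat_mult_id_left mat_id_def zero_mem one_mem)

lemma invertible_over_mat_mult:
  assumes P: "invertible_over R n P" and Q: "invertible_over R n Q"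
  shows "invertible_over R n (mat_mult P n Q)"
proof -
  obtain P' where P'_mem: "\<forall>i<n. \<forall>j<n. P' i j \<in> R"
    and P'_inv: "\<forall>i<n. \<forall>j<n. mat_mult P n P' i j = mat_id i j \<and> mat_mult P' n P i j = mat_id i j"
    using P unfolding invertible_over_iff by blast
  obtain Q' where Q'_mem: "\<forall>i<n. \<forall>j<n. Q' i j \<in> R"
    and Q'_inv: "\<forall>i<n. \<forall>j<n. mat_mult Q n Q' i j = mat_id i j \<and> mat_mult Q' n Q i j = mat_id i j"
    using Q unfolding invertible_over_iff by blast
  have "mat_mult (mat_mult P n Q) n (mat_mult Q' n P') i j = mat_id i j" if "i < n" "j < n" for i j
  proof -
    have "mat_mult (mat_mult P n Q) n (mat_mult Q' n P') i j
        = mat_mult P n (mat_mult (mat_mult Q n Q') n P') i j" by (simp add: mat_mult_assoc)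
    also have "\<dots> = mat_mult P n P' i j"
      using Q'_inv by (intro mat_mult_cong refl mat_mult_eq_id_left) auto
    finally show ?thesis using P'_inv that by simp
  qed
  moreover have "mat_mult (mat_mult Q' n P') n (mat_mult P n Q) i j = mat_id i j" if "i < n" "j < n" for i j
  proof -
    have "mat_mult (mat_mult Q' n P') n (mat_mult P n Q) i j
        = mat_mult Q' n (mat_mult (mat_mult P' n P) n Q) i j" by (simp add: mat_mult_assoc)
    also have "\<dots> = mat_mult Q' n Q i j"
      using P'_inv by (intro mat_mult_cong refl mat_mult_eq_id_left) auto
    finally show ?thesis using Q'_inv that by simp
  qed
  moreover have "mat_mult P n Q i j \<in> R" if "i < n" "j < n" for i j
    using that by (intro mat_mult_mem) (auto intro: invertible_over_mem[OF P] invertible_over_mem[OF Q])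
  moreover have "mat_mult Q' n P' i j \<in> R" if "i < n" "j < n" for i j
    using that P'_mem Q'_mem by (intro mat_mult_mem) auto
  ultimately show ?thesis
    unfolding invertible_over_iff by (intro conjI exI[of _ "mat_mult Q' n P'"] allI impI) simp_all
qed

lemma invertible_over_swap_mat:
  assumes "a < n" "b < n"
  shows "invertible_over R n (swap_mat a b)"
proof -
  have "swap_mat a b i j \<in> R" for i j
    by (simp add: swap_mat_def zero_mem one_mem)
  moreover have "mat_mult (swap_mat a b) n (swap_mat a b) i j = mat_id i j" if "i < n" for i j
    using assms that by (simp add: mat_mult_swap_mat_left swap_mat_def mat_id_def eq_commute)
  ultimately show ?thesis unfolding invertible_over_iff by blast
qed

lemma invertible_over_first_col_mat:
  assumes "0 < n" "\<And>i. i < n \<Longrightarrow> r i \<in> R"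
  shows "invertible_over R n (first_col_mat r)"
proof -
  have "first_col_mat r i j \<in> R" "first_col_mat (\<lambda>i. - r i) i j \<in> R" if "i < n" for i j
    using that assms zero_mem one_mem uminus_mem add_mem by (auto simp: first_col_mat_def mat_id_def)
  moreover have "mat_mult (first_col_mat r) n (first_col_mat (\<lambda>i. - r i)) i j = mat_id i j \<and>
      mat_mult (first_col_mat (\<lambda>i. - r i)) n (first_col_mat r) i j = mat_id i j" if "i < n" for i j
    using that assms(1) by (simp add: mat_mult_first_col_mat_left) (auto simp: first_col_mat_def mat_id_def)
  ultimately show ?thesis unfolding invertible_over_iff by blast
qed

lemma invertible_over_first_row_mat:
  assumes "0 < n" "\<And>j. j < n \<Longrightarrow> c j \<in> R"
  shows "invertible_over R n (first_row_mat c)"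
proof -
  have "first_row_mat c i j \<in> R" "first_row_mat (\<lambda>j. - c j) i j \<in> R" if "j < n" for i j
    using that assms zero_mem one_mem uminus_mem add_mem by (auto simp: first_row_mat_def mat_id_def)
  moreover have "mat_mult (first_row_mat c) n (first_row_mat (\<lambda>j. - c j)) i j = mat_id i j \<and>
      mat_mult (first_row_mat (\<lambda>j. - c j)) n (first_row_mat c) i j = mat_id i j" if "j < n" for i j
    using that assms(1) by (simp add: mat_mult_first_row_mat_right) (auto simp: first_row_mat_def mat_id_def)
  ultimately show ?thesis unfolding invertible_over_iff by blast
qed

lemma invertible_over_diag_block:
  assumes "invertible_over R n P"
  shows "invertible_over R (Suc n) (diag_block 1 P)"
proof -
  obtain P' where P': "\<forall>i<n. \<forall>j<n. P i j \<in> R" "\<forall>i<n. \<forall>j<n. P' i j \<in> R"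
    "\<forall>i<n. \<forall>j<n. mat_mult P n P' i j = mat_id i j \<and> mat_mult P' n P i j = mat_id i j"
    using assms unfolding invertible_over_iff by blast
  have "diag_block 1 P i j \<in> R" "diag_block 1 P' i j \<in> R" if "i < Suc n" "j < Suc n" for i j
    using that P'(1,2) zero_mem one_mem by (auto simp: diag_block_def)
  moreover have "diag_block 1 (mat_mult P n P') i j = mat_id i j \<and>
      diag_block 1 (mat_mult P' n P) i j = mat_id i j" if "i < Suc n" "j < Suc n" for i j
    using that P'(3) by (auto simp: diag_block_def mat_id_def)
  ultimately show ?thesis
    unfolding invertible_over_iff
    by (intro conjI exI[of _ "diag_block 1 P'"]) (auto simp: mat_mult_diag_block)
qed

lemma mat_equiv_over_if_eq_on:
  "(\<And>i j. i < m \<Longrightarrow> j < s \<Longrightarrow> B i j = A i j) \<Longrightarrow> mat_equiv_over R m s A B"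
  unfolding mat_equiv_over_def
  by (intro exI[of _ mat_id] conjI invertible_over_mat_id) (auto simp: mat_mult_id_left mat_mult_id_right)

lemma mat_equiv_over_trans:
  assumes "mat_equiv_over R m s A B" "mat_equiv_over R m s B C"
  shows "mat_equiv_over R m s A C"
proof -
  obtain P1 Q1 where 1: "invertible_over R m P1" "invertible_over R s Q1"
    "\<forall>i<m. \<forall>j<s. B i j = mat_mult (mat_mult P1 m A) s Q1 i j"
    using assms(1) unfolding mat_equiv_over_def by blast
  obtain P2 Q2 where 2: "invertible_over R m P2" "invertible_over R s Q2"
    "\<forall>i<m. \<forall>j<s. C i j = mat_mult (mat_mult P2 m B) s Q2 i j"
    using assms(2) unfolding mat_equiv_over_def by blast
  have "C i j = mat_mult (mat_mult (mat_mult P2 m P1) m A) s (mat_mult Q1 s Q2) i j"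
    if "i < m" "j < s" for i j
  proof -
    have "C i j = mat_mult (mat_mult P2 m (mat_mult (mat_mult P1 m A) s Q1)) s Q2 i j"
      using 2(3) that by (auto simp: 1(3) intro!: mat_mult_cong)
    also have "\<dots> = mat_mult (mat_mult (mat_mult P2 m P1) m A) s (mat_mult Q1 s Q2) i j"
      by (simp add: mat_mult_assoc)
    finally show ?thesis .
  qed
  then show ?thesis
    unfolding mat_equiv_over_def using invertible_over_mat_mult 1(1,2) 2(1,2) by blast
qed

lemma mat_equiv_over_diag_block:
  assumes "mat_equiv_over R m s A B"
  shows "mat_equiv_over R (Suc m) (Suc s) (diag_block p A) (diag_block p B)"
proof -
  obtain P Q where PQ: "invertible_over R m P" "invertible_over R s Q"
    "\<forall>i<m. \<forall>j<s. B i j = mat_mult (mat_mult P m A) s Q i j"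
    using assms unfolding mat_equiv_over_def by blast
  have "diag_block p B i j =
      mat_mult (mat_mult (diag_block 1 P) (Suc m) (diag_block p A)) (Suc s) (diag_block 1 Q) i j"
    if "i < Suc m" "j < Suc s" for i j
    using that PQ(3) by (simp add: mat_mult_diag_block) (auto simp: diag_block_def)
  then show ?thesis unfolding mat_equiv_over_def using invertible_over_diag_block PQ(1,2) by blast
qed

lemma mat_equiv_over_divides_in:
  assumes "mat_equiv_over R m s A B" and "\<And>i j. i < m \<Longrightarrow> j < s \<Longrightarrow> divides_in R p (A i j)"
    and "i < m" "j < s"
  shows "divides_in R p (B i j)"
proof -
  obtain P Q where P: "invertible_over R m P" and Q: "invertible_over R s Q"
    and B: "B i j = mat_mult (mat_mult P m A) s Q i j"
    using assms(1,3,4) unfolding mat_equiv_over_def by blast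
  show ?thesis unfolding B
  proof (rule divides_in_mat_mult_right)
    fix l assume "l < s"
    then show "divides_in R p (mat_mult P m A i l)"
      using assms(2,3) by (intro divides_in_mat_mult_left) (auto intro: invertible_over_mem[OF P])
    show "Q l j \<in> R" using \<open>l < s\<close> assms(4) by (rule invertible_over_mem[OF Q])
  qed
qed

lemma mat_equiv_over_swap_to_corner:
  assumes "i0 < m" "j0 < s"
  shows "mat_equiv_over R m s A
    (\<lambda>i j. A (Transposition.transpose 0 i0 i) (Transposition.transpose 0 j0 j))"
proof -
  let ?P = "swap_mat 0 i0 :: nat \<Rightarrow> nat \<Rightarrow> 'a" and ?Q = "swap_mat 0 j0 :: nat \<Rightarrow> nat \<Rightarrow> 'a"
  have eq: "mat_mult (mat_mult ?P m A) s ?Q i j =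
      A (Transposition.transpose 0 i0 i) (Transposition.transpose 0 j0 j)" if "i < m" "j < s" for i j
  proof -
    have "mat_mult (mat_mult ?P m A) s ?Q i j = mat_mult ?P m A i (Transposition.transpose 0 j0 j)"
      using assms(2) that(2) by (intro mat_mult_swap_mat_right) auto
    also have "\<dots> = A (Transposition.transpose 0 i0 i) (Transposition.transpose 0 j0 j)"
      using assms(1) that(1) by (intro mat_mult_swap_mat_left) auto
    finally show ?thesis .
  qed
  have "invertible_over R m ?P" "invertible_over R s ?Q"
    using assms by (auto intro: invertible_over_swap_mat)
  with eq show ?thesis
    unfolding mat_equiv_over_def by (intro exI[of _ ?P] exI[of _ ?Q]) simp
qed

lemma mat_equiv_over_clear_first_row_col:
  assumes "\<And>i. i < Suc m \<Longrightarrow> divides_in R (A 0 0) (A i 0)"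
    and "\<And>j. j < Suc s \<Longrightarrow> divides_in R (A 0 0) (A 0 j)"
  shows "\<exists>B. mat_equiv_over R (Suc m) (Suc s) A B \<and> B 0 0 = A 0 0 \<and>
    (\<forall>i. 0 < i \<and> i < Suc m \<longrightarrow> B i 0 = 0) \<and> (\<forall>j. 0 < j \<and> j < Suc s \<longrightarrow> B 0 j = 0)"
proof -
  obtain r where r: "\<And>i. i < Suc m \<Longrightarrow> r i \<in> R \<and> A i 0 = r i * A 0 0"
    using assms(1) unfolding divides_in_def by metis
  obtain c where c: "\<And>j. j < Suc s \<Longrightarrow> c j \<in> R \<and> A 0 j = c j * A 0 0"
    using assms(2) unfolding divides_in_def by metis
  define B where "B = mat_mult (mat_mult (first_col_mat (\<lambda>i. - r i)) (Suc m) A) (Suc s)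
    (first_row_mat (\<lambda>j. - c j))"
  have B: "B i j = A i j + (if i \<noteq> 0 then - r i * A 0 j else 0)
      + (if j \<noteq> 0 then (A i 0 + (if i \<noteq> 0 then - r i * A 0 0 else 0)) * - c j else 0)"
    if "i < Suc m" "j < Suc s" for i j
    using that by (simp add: B_def mat_mult_first_row_mat_right mat_mult_first_col_mat_left)
  have "invertible_over R (Suc m) (first_col_mat (\<lambda>i. - r i))"
    using r by (intro invertible_over_first_col_mat uminus_mem) auto
  moreover have "invertible_over R (Suc s) (first_row_mat (\<lambda>j. - c j))"
    using c by (intro invertible_over_first_row_mat uminus_mem) auto
  ultimately have "mat_equiv_over R (Suc m) (Suc s) A B"
    unfolding mat_equiv_over_def B_def by blast
  moreover have "B 0 0 = A 0 0" using B[of 0 0] by simp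
  moreover have "B i 0 = 0" if "0 < i" "i < Suc m" for i
    using B[of i 0] r[of i] that by simp
  moreover have "B 0 j = 0" if "0 < j" "j < Suc s" for j
    using B[of 0 j] c[of j] that by (simp add: mult.commute)
  ultimately show ?thesis by blast
qed

lemma mat_equiv_over_pivot_corner:
  assumes "\<forall>i<Suc m. \<forall>j<Suc s. A i j \<in> R"
  shows "\<exists>B. mat_equiv_over R (Suc m) (Suc s) A B \<and>
    (\<forall>i<Suc m. \<forall>j<Suc s. divides_in R (B 0 0) (B i j)) \<and>
    (\<forall>i. 0 < i \<and> i < Suc m \<longrightarrow> B i 0 = 0) \<and> (\<forall>j. 0 < j \<and> j < Suc s \<longrightarrow> B 0 j = 0)"
proof -
  let ?entries = "(\<lambda>(i, j). A i j) ` ({..<Suc m} \<times> {..<Suc s})"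
  have "finite ?entries" by simp
  moreover have "?entries \<noteq> {}" by (simp add: lessThan_empty_iff)
  moreover have "?entries \<subseteq> R" using assms by auto
  ultimately have "\<exists>p\<in>?entries. \<forall>x\<in>?entries. divides_in R p x" by (rule finite_common_divisor_in)
  then obtain p where "p \<in> ?entries" and p: "\<forall>x\<in>?entries. divides_in R p x" by (rule bexE)
  then obtain i0 j0 where "i0 < Suc m" "j0 < Suc s" "p = A i0 j0" by auto
  define A1 where "A1 i j = A (Transposition.transpose 0 i0 i) (Transposition.transpose 0 j0 j)" for i j
  have equiv1: "mat_equiv_over R (Suc m) (Suc s) A A1"
    unfolding A1_def using \<open>i0 < Suc m\<close> \<open>j0 < Suc s\<close> by (rule mat_equiv_over_swap_to_corner)
  have A1_dvd: "divides_in R (A1 0 0) (A1 i j)" if "i < Suc m" "j < Suc s" for i j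
    using p that \<open>i0 < Suc m\<close> \<open>j0 < Suc s\<close> \<open>p = A i0 j0\<close> by (auto simp: A1_def transpose_less)
  obtain B where equiv2: "mat_equiv_over R (Suc m) (Suc s) A1 B" and corner: "B 0 0 = A1 0 0"
    and col: "\<forall>i. 0 < i \<and> i < Suc m \<longrightarrow> B i 0 = 0" and row: "\<forall>j. 0 < j \<and> j < Suc s \<longrightarrow> B 0 j = 0"
    using mat_equiv_over_clear_first_row_col[of m A1 s] A1_dvd by blast
  have "\<forall>i<Suc m. \<forall>j<Suc s. divides_in R (B 0 0) (B i j)"
    unfolding corner using mat_equiv_over_divides_in[OF equiv2 A1_dvd] by blast
  with mat_equiv_over_trans[OF equiv1 equiv2] col row show ?thesis by blast
qed

lemma smith_form_of_mat_equiv_over: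
  "mat_equiv_over R m s A B \<Longrightarrow> smith_form_of R m s B D \<Longrightarrow> smith_form_of R m s A D"
  unfolding smith_form_of_iff by (blast intro: mat_equiv_over_trans)

lemma smith_form_of_diag_block:
  assumes smith: "smith_form_of R m s B D" and dvd: "\<forall>i<m. \<forall>j<s. divides_in R p (B i j)"
  shows "smith_form_of R (Suc m) (Suc s) (diag_block p B) (diag_block p D)"
proof -
  have equiv: "mat_equiv_over R m s B D"
    and diag: "\<forall>i<m. \<forall>j<s. i \<noteq> j \<longrightarrow> D i j = 0"
    and chain: "\<forall>k. Suc k < min m s \<longrightarrow> (\<exists>r\<in>R. D (Suc k) (Suc k) = r * D k k)"
    using smith unfolding smith_form_of_iff by auto
  have "\<exists>r\<in>R. diag_block p D (Suc k) (Suc k) = r * diag_block p D k k"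
    if "Suc k < min (Suc m) (Suc s)" for k
  proof (cases k)
    case 0
    then have "divides_in R p (D 0 0)"
      using that mat_equiv_over_divides_in[OF equiv] dvd by simp
    then show ?thesis using \<open>k = 0\<close> by (simp add: diag_block_def divides_in_def)
  next
    case (Suc k')
    then show ?thesis using that chain by (simp add: diag_block_def)
  qed
  moreover have "\<forall>i<Suc m. \<forall>j<Suc s. i \<noteq> j \<longrightarrow> diag_block p D i j = 0"
    using diag by (auto simp: diag_block_def)
  ultimately show ?thesis
    unfolding smith_form_of_iff using mat_equiv_over_diag_block[OF equiv] by blast
qed

lemma smith_form_exists:
  assumes "\<forall>i<m. \<forall>j<s. A i j \<in> R"
  shows "\<exists>D. smith_form_of R m s A D"
  using assms
proof (induction m arbitrary: s A)
  case 0
  have "smith_form_of R 0 s A A" unfolding smith_form_of_iff by (simp add: mat_equiv_over_if_eq_on)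
  then show ?case by blast
next
  case (Suc m)
  show ?case
  proof (cases s)
    case 0
    have "smith_form_of R (Suc m) 0 A A" unfolding smith_form_of_iff by (simp add: mat_equiv_over_if_eq_on)
    then show ?thesis using \<open>s = 0\<close> by blast
  next
    case (Suc s')
    have "\<exists>B. mat_equiv_over R (Suc m) (Suc s') A B \<and>
      (\<forall>i<Suc m. \<forall>j<Suc s'. divides_in R (B 0 0) (B i j)) \<and>
      (\<forall>i. 0 < i \<and> i < Suc m \<longrightarrow> B i 0 = 0) \<and> (\<forall>j. 0 < j \<and> j < Suc s' \<longrightarrow> B 0 j = 0)"
      using Suc.prems \<open>s = Suc s'\<close> by (intro mat_equiv_over_pivot_corner) simp
    then obtain B where equiv: "mat_equiv_over R (Suc m) (Suc s') A B"
      and B_dvd: "\<forall>i<Suc m. \<forall>j<Suc s'. divides_in R (B 0 0) (B i j)"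
      and B_col: "\<forall>i. 0 < i \<and> i < Suc m \<longrightarrow> B i 0 = 0"
      and B_row: "\<forall>j. 0 < j \<and> j < Suc s' \<longrightarrow> B 0 j = 0"
      by blast
    define B' where "B' i j = B (Suc i) (Suc j)" for i j
    have B'_dvd: "\<forall>i<m. \<forall>j<s'. divides_in R (B 0 0) (B' i j)"
      using B_dvd by (simp add: B'_def)
    have "divides_in R 1 (B 0 0)"
      using equiv by (rule mat_equiv_over_divides_in)
        (use Suc.prems \<open>s = Suc s'\<close> in \<open>auto simp: divides_in_one_iff\<close>)
    then have "\<forall>i<m. \<forall>j<s'. B' i j \<in> R"
      using B'_dvd divides_in_trans unfolding divides_in_one_iff[symmetric] by blast
    then obtain D' where "smith_form_of R m s' B' D'" using Suc.IH by blast
    then have "smith_form_of R (Suc m) (Suc s') (diag_block (B 0 0) B') (diag_block (B 0 0) D')"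
      using B'_dvd by (rule smith_form_of_diag_block)
    moreover have "mat_equiv_over R (Suc m) (Suc s') B (diag_block (B 0 0) B')"
      using B_col B_row
      by (intro mat_equiv_over_if_eq_on) (auto simp: diag_block_def B'_def gr0_conv_Suc)
    ultimately show ?thesis
      unfolding \<open>s = Suc s'\<close> using equiv by (blast intro: smith_form_of_mat_equiv_over)
  qed
qed

end

section \<open>Rank\<close>

lemma mat_mult_right_inverse_sum:
  assumes "\<And>a b. a < s \<Longrightarrow> b < s \<Longrightarrow> mat_mult Q s Q' a b = mat_id a b" and "k < s"
  shows "(\<Sum>j<s. (\<Sum>l<s. u l * Q l j) * Q' j k) = u k"
proof -
  have "(\<Sum>j<s. (\<Sum>l<s. u l * Q l j) * Q' j k) = (\<Sum>l<s. u l * mat_mult Q s Q' l k)"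
    unfolding mat_mult_def sum_distrib_right sum_distrib_left
    by (subst sum.swap) (simp add: mult.assoc)
  also have "\<dots> = (\<Sum>l<s. u l * mat_id l k)"
    using assms by (intro sum.cong) auto
  also have "\<dots> = u k"
    using \<open>k < s\<close> by (simp add: mat_id_def if_distrib cong: if_cong)
  finally show ?thesis .
qed

lemma sum_coords_mat_mult:
  assumes "\<forall>j<s. u j = (\<Sum>i<m. C i j * \<alpha> i)"
  shows "(\<Sum>l<s. u l * Q l j) = (\<Sum>i<m. mat_mult C s Q i j * \<alpha> i)"
proof -
  have "(\<Sum>l<s. u l * Q l j) = (\<Sum>l<s. \<Sum>i<m. C i l * Q l j * \<alpha> i)"
    using assms by (intro sum.cong refl) (simp add: sum_distrib_left sum_distrib_right mult_ac)
  also have "\<dots> = (\<Sum>i<m. mat_mult C s Q i j * \<alpha> i)"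
    unfolding mat_mult_def sum_distrib_right by (rule sum.swap)
  finally show ?thesis .
qed

lemma mat_mult_eq_left_inverse_mult:
  assumes "\<And>a b. a < m \<Longrightarrow> b < m \<Longrightarrow> mat_mult P' m P a b = mat_id a b"
    and "\<forall>i<m. \<forall>j<s. D i j = mat_mult (mat_mult P m C) s Q i j"
    and "i < m" "j < s"
  shows "mat_mult C s Q i j = (\<Sum>k<m. P' i k * D k j)"
proof -
  have "(\<Sum>k<m. P' i k * D k j) = mat_mult P' m (mat_mult (mat_mult P m C) s Q) i j"
    unfolding mat_mult_def[of P' m] using assms(2,4) by (intro sum.cong) auto
  also have "\<dots> = mat_mult (mat_mult P' m P) m (mat_mult C s Q) i j" by (simp add: mat_mult_assoc)
  also have "\<dots> = mat_mult C s Q i j" using assms(1,3) by (rule mat_mult_eq_id_left)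
  finally show ?thesis by simp
qed

lemma sum_coords_mult_eq_0_if_diag_zero:
  assumes coords: "\<forall>j<s. u j = (\<Sum>i<m. C i j * \<alpha> i)"
    and P': "\<And>a b. a < m \<Longrightarrow> b < m \<Longrightarrow> mat_mult P' m P a b = mat_id a b"
    and D: "\<forall>i<m. \<forall>j<s. D i j = mat_mult (mat_mult P m C) s Q i j"
    and D_diag: "\<forall>i<m. \<forall>j<s. i \<noteq> j \<longrightarrow> D i j = 0"
    and "j < s" and zero: "j < m \<Longrightarrow> D j j = 0"
  shows "(\<Sum>l<s. u l * Q l j) = 0"
proof -
  have "D k j = 0" if "k < m" for k
    using D_diag zero that \<open>j < s\<close> by (cases "k = j") auto
  then show ?thesis
    unfolding sum_coords_mat_mult[OF coords]
    using mat_mult_eq_left_inverse_mult[OF P' D _ \<open>j < s\<close>] by simp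
qed

context chain_subring
begin

lemma rk_attained:
  assumes "R_basis R m \<beta>"
  shows "\<exists>\<alpha> C D. R_basis R m \<alpha> \<and> (\<forall>i<m. \<forall>j<s. C i j \<in> R) \<and> (\<forall>j<s. u j = (\<Sum>i<m. C i j * \<alpha> i)) \<and>
    smith_form_of R m s C D \<and> rk R m s u = card {k. k < min m s \<and> D k k \<noteq> 0}"
proof -
  have "\<forall>j. \<exists>c. (\<forall>i<m. c i \<in> R) \<and> u j = (\<Sum>i<m. c i * \<beta> i)"
    using assms unfolding R_basis_def by metis
  then obtain c where c: "\<And>j. (\<forall>i<m. c j i \<in> R) \<and> u j = (\<Sum>i<m. c j i * \<beta> i)" by metis
  define C where "C i j = c j i" for i j
  have C: "\<forall>i<m. \<forall>j<s. C i j \<in> R" "\<forall>j<s. u j = (\<Sum>i<m. C i j * \<beta> i)"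
    using c by (simp_all add: C_def)
  then obtain D where "smith_form_of R m s C D" using smith_form_exists by blast
  then have "\<exists>r \<alpha> C D. R_basis R m \<alpha> \<and> (\<forall>i<m. \<forall>j<s. C i j \<in> R) \<and>
      (\<forall>j<s. u j = (\<Sum>i<m. C i j * \<alpha> i)) \<and> smith_form_of R m s C D \<and>
      r = card {k. k < min m s \<and> D k k \<noteq> 0}"
    using assms C by blast
  then show ?thesis unfolding rk_def by (rule LeastI_ex[THEN exE]) blast
qed

text \<open>If \<open>D = P C Q\<close>, the coordinate matrix of \<open>u Q\<close> is \<open>P\<^sup>-\<^sup>1 D\<close>, so \<open>u Q\<close> vanishes outside the
  nonzero diagonal entries of \<open>D\<close>, and \<open>u = (u Q) Q\<^sup>-\<^sup>1\<close>.\<close>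

lemma rk_spanning_list:
  assumes "R_basis R m \<beta>"
  shows "\<exists>V. length V = rk R m s u \<and>
    (\<forall>M. R_submodule R M \<longrightarrow> set V \<subseteq> M \<longrightarrow> (\<forall>j<s. u j \<in> M))"
proof -
  obtain \<alpha> C D where coords: "\<forall>j<s. u j = (\<Sum>i<m. C i j * \<alpha> i)"
    and smith: "smith_form_of R m s C D" and rk: "rk R m s u = card {k. k < min m s \<and> D k k \<noteq> 0}"
    using rk_attained[OF assms] by blast
  obtain P Q where P: "invertible_over R m P" and Q: "invertible_over R s Q"
    and D: "\<forall>i<m. \<forall>j<s. D i j = mat_mult (mat_mult P m C) s Q i j"
    and D_diag: "\<forall>i<m. \<forall>j<s. i \<noteq> j \<longrightarrow> D i j = 0"
    using smith unfolding smith_form_of_def by blast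
  obtain P' where P': "\<And>a b. a < m \<Longrightarrow> b < m \<Longrightarrow> mat_mult P' m P a b = mat_id a b"
    using P unfolding invertible_over_iff by blast
  obtain Q' where Q'_mem: "\<forall>i<s. \<forall>j<s. Q' i j \<in> R"
    and Q': "\<And>a b. a < s \<Longrightarrow> b < s \<Longrightarrow> mat_mult Q s Q' a b = mat_id a b"
    using Q unfolding invertible_over_iff by blast
  define u' where "u' j = (\<Sum>l<s. u l * Q l j)" for j
  define K where "K = {k. k < min m s \<and> D k k \<noteq> 0}"
  have u'_zero: "u' j = 0" if "j < s" "j \<notin> K" for j
  proof -
    have "j < m \<Longrightarrow> D j j = 0" using that by (auto simp: K_def)
    with sum_coords_mult_eq_0_if_diag_zero[OF coords P' D D_diag \<open>j < s\<close>] show ?thesis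
      by (simp add: u'_def)
  qed
  define V where "V = map u' (sorted_list_of_set K)"
  have "\<forall>j<s. u j \<in> M" if M: "R_submodule R M" and "set V \<subseteq> M" for M
  proof (intro allI impI)
    fix k assume "k < s"
    have "u' j \<in> M" if "j < s" for j
      using \<open>set V \<subseteq> M\<close> u'_zero[OF that] M
      by (cases "j \<in> K") (auto simp: V_def K_def R_submodule_def)
    then have "(\<Sum>j<s. u' j * Q' j k) \<in> M"
      using Q'_mem \<open>k < s\<close> by (intro R_submodule_sum[OF M]) auto
    moreover have "(\<Sum>j<s. u' j * Q' j k) = u k"
      unfolding u'_def by (rule mat_mult_right_inverse_sum[OF Q' \<open>k < s\<close>])
    ultimately show "u k \<in> M" by simp
  qed
  moreover have "length V = rk R m s u" unfolding V_def rk K_def by simp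
  ultimately show ?thesis by blast
qed

end

text \<open>Only the existence of \<open>F\<close> is asserted.\<close>

theorem corollary3:
  fixes R :: "'a::comm_ring_1 set"
    and h :: "'a poly" and \<theta> :: 'a and m :: nat
    and \<sigma> :: "'a \<Rightarrow> 'a"
    and l :: nat and a :: "nat \<Rightarrow> 'a" and n :: "nat \<Rightarrow> nat" and u :: "nat \<Rightarrow> nat \<Rightarrow> 'a"
  assumes finS: "finite (UNIV :: 'a set)"
    and nontriv: "(0::'a) \<noteq> 1"
    and chainR: "chain_ring R"
    and h_coeffs: "\<forall>i. coeff h i \<in> R"
    and h_monic: "lead_coeff h = 1"
    and h_deg: "degree h = m"
    and h_irred: "irred_mod_max R h"
    and theta_root: "poly h \<theta> = 0"
    and theta_basis: "R_basis R m (\<lambda>i. \<theta> ^ i)"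
    and sigma_aut: "ring_aut \<sigma>"
    and sigma_fixed: "{y. \<sigma> y = y} = R"
    and sigma_gen: "\<forall>\<tau>. ring_aut \<tau> \<and> (\<forall>r\<in>R. \<tau> r = r) \<longrightarrow> (\<exists>k. \<tau> = \<sigma> ^^ k)"
    and sigma_frob: "\<forall>y. \<sigma> y - y ^ residue_card R \<in> ext_ideal R"
    and distinct: "\<forall>i j. i < j \<and> j < l \<longrightarrow>
        (\<forall>\<beta> \<gamma>. \<beta> * \<gamma> = 1 \<longrightarrow> (a i - \<sigma> \<beta> * a j * \<gamma>) dvd 1)"
  shows "\<exists>F :: 'a poly. lead_coeff F = 1 \<and>
            degree F = (\<Sum>i<l. rk R m (n i) (u i)) \<and>
            (\<forall>i<l. \<forall>j<n i. skew_eval \<sigma> F (a i) (u i j) = 0)"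
proof -
  interpret galois_chain_ext R \<sigma>
    using chainR finS nontriv sigma_aut sigma_fixed sigma_frob
    by unfold_locales (simp_all add: chain_subring_def)
  have fixes_R: "\<And>r. r \<in> R \<Longrightarrow> \<sigma> r = r" using sigma_fixed by auto
  have "\<forall>i. \<exists>V. length V = rk R m (n i) (u i) \<and>
      (\<forall>M. R_submodule R M \<longrightarrow> set V \<subseteq> M \<longrightarrow> (\<forall>j<n i. u i j \<in> M))"
    using rk_spanning_list[OF theta_basis] by blast
  then obtain V where V_length: "\<And>i. length (V i) = rk R m (n i) (u i)"
    and V_span: "\<And>i M. R_submodule R M \<Longrightarrow> set (V i) \<subseteq> M \<Longrightarrow> \<forall>j<n i. u i j \<in> M"
    by metis
  define ps where "ps = concat (map (\<lambda>i. map (Pair (a i)) (V i)) [0..<l])"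
  obtain F where F: "lead_coeff F = 1" "degree F = length ps"
    and roots: "\<forall>(b, \<beta>)\<in>set ps. skew_eval \<sigma> F b \<beta> = 0"
    using monic_skew_poly_vanishing_on_list[OF sigma_aut nontriv dvd_image] by blast
  have "length ps = (\<Sum>i<l. rk R m (n i) (u i))"
    unfolding ps_def by (simp add: length_concat comp_def V_length sum_list_sum_nth atLeast0LessThan)
  moreover have "skew_eval \<sigma> F (a i) (u i j) = 0" if "i < l" "j < n i" for i j
  proof -
    have "set (V i) \<subseteq> {\<beta>. skew_eval \<sigma> F (a i) \<beta> = 0}"
      using roots \<open>i < l\<close> by (auto simp: ps_def)
    then show ?thesis
      using V_span[OF R_submodule_skew_roots[OF sigma_aut fixes_R]] \<open>j < n i\<close> by blast
  qed
  ultimately show ?thesis using F by (intro exI[of _ F]) auto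
qed

end
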